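(* Let $\Lambda$ be a left-artinian ring, $\mathcal{C}=\mathrm{mod}(\Lambda)$, let $\beta$ be a radical and $\alpha$ a pre-radical on $\mathcal{C}$. If $\mathcal{F}_\alpha\subseteq\mathcal{T}_\beta$, then for every $M\in\mathcal{C}$ we have $\mathrm{soc}(q_\beta(M))\in\mathcal{T}_\alpha\cap\mathcal{F}_\beta$.
   Context: $\mathcal{C}$ is the category of finitely generated left $\Lambda$-modules. A pre-radical is an additive subfunctor $\alpha$ of the identity functor; for it, $q_\alpha:=\mathrm{Id}/\alpha$, so $q_\alpha(M)=M/\alpha(M)$. A radical is a pre-radical $\beta$ with $\beta\circ q_\beta=0$. $\mathcal{F}_\alpha=\{M:\alpha(M)=0\}$, $\mathcal{T}_\alpha=\{M:\alpha(M)=M\}$. *)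

theory Defs
  imports "HOL-Algebra.Module"
begin

text \<open>HOL-Algebra's module locale requires a commutative ring, so we define
left modules over an arbitrary ring directly, reusing the module record.\<close>

definition lmodule :: "('a, 'r) ring_scheme \<Rightarrow> ('a, 'm) module \<Rightarrow> bool" where
  "lmodule R M \<longleftrightarrow> ring R \<and> abelian_group M \<and>
     (\<forall>a\<in>carrier R. \<forall>x\<in>carrier M. a \<odot>\<^bsub>M\<^esub> x \<in> carrier M) \<and>
     (\<forall>a\<in>carrier R. \<forall>b\<in>carrier R. \<forall>x\<in>carrier M.
        (a \<oplus>\<^bsub>R\<^esub> b) \<odot>\<^bsub>M\<^esub> x = a \<odot>\<^bsub>M\<^esub> x \<oplus>\<^bsub>M\<^esub> b \<odot>\<^bsub>M\<^esub> x) \<and>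
     (\<forall>a\<in>carrier R. \<forall>x\<in>carrier M. \<forall>y\<in>carrier M.
        a \<odot>\<^bsub>M\<^esub> (x \<oplus>\<^bsub>M\<^esub> y) = a \<odot>\<^bsub>M\<^esub> x \<oplus>\<^bsub>M\<^esub> a \<odot>\<^bsub>M\<^esub> y) \<and>
     (\<forall>a\<in>carrier R. \<forall>b\<in>carrier R. \<forall>x\<in>carrier M.
        (a \<otimes>\<^bsub>R\<^esub> b) \<odot>\<^bsub>M\<^esub> x = a \<odot>\<^bsub>M\<^esub> (b \<odot>\<^bsub>M\<^esub> x)) \<and>
     (\<forall>x\<in>carrier M. \<one>\<^bsub>R\<^esub> \<odot>\<^bsub>M\<^esub> x = x)"

text \<open>Submodules: HOL-Algebra's \<open>submodule N R M\<close> (additive subgroup closed under scalars).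
 A submodule N of M, viewed as a module, is \<open>M\<lparr>carrier := N\<rparr>\<close>.\<close>

definition fg_module :: "('a, 'r) ring_scheme \<Rightarrow> ('a, 'm) module \<Rightarrow> bool" where
  "fg_module R M \<longleftrightarrow> lmodule R M \<and>
     (\<exists>A. finite A \<and> A \<subseteq> carrier M \<and>
        (\<forall>N. submodule N R M \<and> A \<subseteq> N \<longrightarrow> N = carrier M))"

definition lmod_hom :: "('a, 'r) ring_scheme \<Rightarrow> ('a, 'm) module \<Rightarrow> ('a, 'm) module \<Rightarrow> ('m \<Rightarrow> 'm) set" where
  "lmod_hom R M N = {f. f \<in> carrier M \<rightarrow> carrier N \<and>
     (\<forall>x\<in>carrier M. \<forall>y\<in>carrier M. f (x \<oplus>\<^bsub>M\<^esub> y) = f x \<oplus>\<^bsub>N\<^esub> f y) \<and>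
     (\<forall>a\<in>carrier R. \<forall>x\<in>carrier M. f (a \<odot>\<^bsub>M\<^esub> x) = a \<odot>\<^bsub>N\<^esub> f x)}"

definition simple_module :: "('a, 'r) ring_scheme \<Rightarrow> ('a, 'm) module \<Rightarrow> bool" where
  "simple_module R M \<longleftrightarrow> lmodule R M \<and> carrier M \<noteq> {\<zero>\<^bsub>M\<^esub>} \<and>
     (\<forall>N. submodule N R M \<longrightarrow> N = {\<zero>\<^bsub>M\<^esub>} \<or> N = carrier M)"

definition soc :: "('a, 'r) ring_scheme \<Rightarrow> ('a, 'm) module \<Rightarrow> 'm set" where
  "soc R M = \<Inter>{N. submodule N R M \<and>
      (\<forall>S. submodule S R M \<and> simple_module R (M\<lparr>carrier := S\<rparr>) \<longrightarrow> S \<subseteq> N)}"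

definition left_ideal :: "('a, 'r) ring_scheme \<Rightarrow> 'a set \<Rightarrow> bool" where
  "left_ideal R I \<longleftrightarrow> subgroup I (add_monoid R) \<and>
     (\<forall>r\<in>carrier R. \<forall>x\<in>I. r \<otimes>\<^bsub>R\<^esub> x \<in> I)"

definition left_artinian :: "('a, 'r) ring_scheme \<Rightarrow> bool" where
  "left_artinian R \<longleftrightarrow> ring R \<and>
     \<not> (\<exists>I :: nat \<Rightarrow> 'a set. (\<forall>n. left_ideal R (I n)) \<and> (\<forall>n. I (Suc n) \<subset> I n))"

text \<open>A pre-radical: a subfunctor of the identity functor on the category of finitely
 generated left R-modules (with carriers in the type 'm). Additivity is automatic for
 subfunctors of the identity (morphisms act by restriction).\<close>
definition preradical :: "('a, 'r) ring_scheme \<Rightarrow> (('a, 'm) module \<Rightarrow> 'm set) \<Rightarrow> bool" where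
  "preradical R \<alpha> \<longleftrightarrow>
     (\<forall>M. fg_module R M \<longrightarrow> submodule (\<alpha> M) R M) \<and>
     (\<forall>M N f. fg_module R M \<and> fg_module R N \<and> f \<in> lmod_hom R M N \<longrightarrow> f ` \<alpha> M \<subseteq> \<alpha> N)"

text \<open>\<open>is_quotient_by R M K N p\<close>: N together with the surjection p : M \<rightarrow> N with kernel K
 represents the quotient module M/K (determined up to isomorphism).\<close>
definition is_quotient_by :: "('a, 'r) ring_scheme \<Rightarrow> ('a, 'm) module \<Rightarrow> 'm set \<Rightarrow>
    ('a, 'm) module \<Rightarrow> ('m \<Rightarrow> 'm) \<Rightarrow> bool" where
  "is_quotient_by R M K N p \<longleftrightarrow> fg_module R N \<and> p \<in> lmod_hom R M N \<and>
     p ` carrier M = carrier N \<and> {x \<in> carrier M. p x = \<zero>\<^bsub>N\<^esub>} = K"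

text \<open>A radical: a pre-radical \<beta> with \<beta>(q_\<beta>(M)) = 0 for all M, where q_\<beta>(M) = M/\<beta>(M).\<close>
definition radical :: "('a, 'r) ring_scheme \<Rightarrow> (('a, 'm) module \<Rightarrow> 'm set) \<Rightarrow> bool" where
  "radical R \<beta> \<longleftrightarrow> preradical R \<beta> \<and>
     (\<forall>M N p. fg_module R M \<and> is_quotient_by R M (\<beta> M) N p \<longrightarrow> \<beta> N = {\<zero>\<^bsub>N\<^esub>})"

definition torsionfree_class :: "('a, 'r) ring_scheme \<Rightarrow> (('a, 'm) module \<Rightarrow> 'm set) \<Rightarrow> ('a, 'm) module set" where
  "torsionfree_class R \<alpha> = {M. fg_module R M \<and> \<alpha> M = {\<zero>\<^bsub>M\<^esub>}}"

definition torsion_class :: "('a, 'r) ring_scheme \<Rightarrow> (('a, 'm) module \<Rightarrow> 'm set) \<Rightarrow> ('a, 'm) module set" where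
  "torsion_class R \<alpha> = {M. fg_module R M \<and> \<alpha> M = carrier M}"

end

theory Submission
  imports Defs
begin

text \<open>
  Over a left-artinian ring every finitely generated module satisfies the descending chain
  condition on submodules; hence its socle is finitely generated, for otherwise simple submodules
  chosen one after another outside the span of the previous ones would be independent and their
  tail sums would form a strictly descending chain.

  Let \<open>N = q\<^sub>\<beta>(M)\<close>. As \<open>\<beta>\<close> is a radical, \<open>\<beta>(N) = 0\<close>, and since pre-radicals are
  monotone along inclusions of submodules, also \<open>\<beta>(soc N) = 0\<close>. For a simple submodule
  \<open>T\<close> of \<open>N\<close>, \<open>\<alpha>(T)\<close> is \<open>0\<close> or \<open>T\<close>; in the first case \<open>T \<in> \<F>\<^sub>\<alpha> \<subseteq> \<T>\<^sub>\<beta>\<close>, so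
  \<open>T = \<beta>(T) \<subseteq> \<beta>(N) = 0\<close>, which is absurd. Thus every simple \<open>T\<close> satisfies
  \<open>T = \<alpha>(T) \<subseteq> \<alpha>(soc N)\<close>, i.e. \<open>\<alpha>(soc N) = soc N\<close>.
\<close>

section \<open>Left modules over a ring\<close>

locale left_module = R?: ring R + M?: abelian_group M
  for R :: "('a, 'r) ring_scheme" (structure) and M :: "('a, 'm) module" (structure) +
  assumes smult_closed [simp, intro]:
      "\<lbrakk>a \<in> carrier R; x \<in> carrier M\<rbrakk> \<Longrightarrow> a \<odot>\<^bsub>M\<^esub> x \<in> carrier M"
    and smult_l_distr:
      "\<lbrakk>a \<in> carrier R; b \<in> carrier R; x \<in> carrier M\<rbrakk> \<Longrightarrow>
      (a \<oplus> b) \<odot>\<^bsub>M\<^esub> x = a \<odot>\<^bsub>M\<^esub> x \<oplus>\<^bsub>M\<^esub> b \<odot>\<^bsub>M\<^esub> x"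
    and smult_r_distr:
      "\<lbrakk>a \<in> carrier R; x \<in> carrier M; y \<in> carrier M\<rbrakk> \<Longrightarrow>
      a \<odot>\<^bsub>M\<^esub> (x \<oplus>\<^bsub>M\<^esub> y) = a \<odot>\<^bsub>M\<^esub> x \<oplus>\<^bsub>M\<^esub> a \<odot>\<^bsub>M\<^esub> y"
    and smult_assoc1:
      "\<lbrakk>a \<in> carrier R; b \<in> carrier R; x \<in> carrier M\<rbrakk> \<Longrightarrow>
      (a \<otimes> b) \<odot>\<^bsub>M\<^esub> x = a \<odot>\<^bsub>M\<^esub> (b \<odot>\<^bsub>M\<^esub> x)"
    and smult_one [simp]: "x \<in> carrier M \<Longrightarrow> \<one> \<odot>\<^bsub>M\<^esub> x = x"

lemma lmodule_iff_left_module: "lmodule R M \<longleftrightarrow> left_module R M"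
proof
  assume "lmodule R M"
  then show "left_module R M"
    by (intro left_module.intro left_module_axioms.intro) (simp_all add: lmodule_def)
next
  assume "left_module R M"
  then interpret left_module R M .
  show "lmodule R M"
    by (simp add: lmodule_def R.ring_axioms M.abelian_group_axioms
        smult_l_distr smult_r_distr smult_assoc1)
qed

lemma fg_module_left_module: "fg_module R M \<Longrightarrow> left_module R M"
  by (simp add: fg_module_def lmodule_iff_left_module)

context left_module
begin

lemma smult_l_null [simp]: "x \<in> carrier M \<Longrightarrow> \<zero> \<odot>\<^bsub>M\<^esub> x = \<zero>\<^bsub>M\<^esub>"
  by (metis M.add.r_cancel_one' R.add.r_one R.zero_closed smult_closed smult_l_distr)

lemma smult_r_null [simp]: "a \<in> carrier R \<Longrightarrow> a \<odot>\<^bsub>M\<^esub> \<zero>\<^bsub>M\<^esub> = \<zero>\<^bsub>M\<^esub>"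
  by (metis M.add.r_cancel_one' M.l_zero M.zero_closed smult_closed smult_r_distr)

lemma smult_l_minus:
  "\<lbrakk>a \<in> carrier R; x \<in> carrier M\<rbrakk> \<Longrightarrow> (\<ominus> a) \<odot>\<^bsub>M\<^esub> x = \<ominus>\<^bsub>M\<^esub> (a \<odot>\<^bsub>M\<^esub> x)"
  by (metis M.minus_equality R.a_inv_closed R.l_neg smult_closed smult_l_distr smult_l_null)

lemma submoduleI:
  assumes "H \<subseteq> carrier M" and "\<zero>\<^bsub>M\<^esub> \<in> H"
    and "\<And>a b. \<lbrakk>a \<in> H; b \<in> H\<rbrakk> \<Longrightarrow> a \<oplus>\<^bsub>M\<^esub> b \<in> H"
    and "\<And>a x. \<lbrakk>a \<in> carrier R; x \<in> H\<rbrakk> \<Longrightarrow> a \<odot>\<^bsub>M\<^esub> x \<in> H"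
  shows "submodule H R M"
proof -
  have "\<ominus>\<^bsub>M\<^esub> x \<in> H" if "x \<in> H" for x
    using assms(1) assms(4)[of "\<ominus> \<one>" x] that smult_l_minus[of \<one> x] by auto
  then show ?thesis
    by (intro submodule.intro subgroup.intro) (use assms in \<open>auto simp: submodule_axioms_def a_inv_def\<close>)
qed

lemma submoduleE:
  assumes "submodule H R M"
  shows "H \<subseteq> carrier M" and "\<zero>\<^bsub>M\<^esub> \<in> H"
    and "\<And>a b. \<lbrakk>a \<in> H; b \<in> H\<rbrakk> \<Longrightarrow> a \<oplus>\<^bsub>M\<^esub> b \<in> H"
    and "\<And>a. a \<in> H \<Longrightarrow> \<ominus>\<^bsub>M\<^esub> a \<in> H"
    and "\<And>a x. \<lbrakk>a \<in> carrier R; x \<in> H\<rbrakk> \<Longrightarrow> a \<odot>\<^bsub>M\<^esub> x \<in> H"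
  using submodule.axioms[OF assms] by (auto simp: subgroup_def submodule_axioms_def a_inv_def)

lemma carrier_submodule: "submodule (carrier M) R M"
  by (rule submoduleI) auto

lemma zero_submodule: "submodule {\<zero>\<^bsub>M\<^esub>} R M"
  by (rule submoduleI) auto

lemma submodule_Inter:
  assumes "\<F> \<noteq> {}" and "\<And>H. H \<in> \<F> \<Longrightarrow> submodule H R M"
  shows "submodule (\<Inter>\<F>) R M"
proof (rule submoduleI)
  show "\<Inter>\<F> \<subseteq> carrier M" using assms submoduleE(1) by blast
  show "\<zero>\<^bsub>M\<^esub> \<in> \<Inter>\<F>" using assms(2) submoduleE(2) by blast
  show "a \<oplus>\<^bsub>M\<^esub> b \<in> \<Inter>\<F>" if "a \<in> \<Inter>\<F>" "b \<in> \<Inter>\<F>" for a b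
    using that assms(2) submoduleE(3) by blast
  show "a \<odot>\<^bsub>M\<^esub> x \<in> \<Inter>\<F>" if "a \<in> carrier R" "x \<in> \<Inter>\<F>" for a x
    using that assms(2) submoduleE(5) by blast
qed

lemma submodule_Int:
  "\<lbrakk>submodule H R M; submodule K R M\<rbrakk> \<Longrightarrow> submodule (H \<inter> K) R M"
  using submodule_Inter[of "{H, K}"] by auto

lemma submodule_left_module:
  assumes "submodule H R M"
  shows "left_module R (M\<lparr>carrier := H\<rparr>)"
proof -
  interpret H: submodule H R M by (rule assms)
  have "abelian_group (M\<lparr>carrier := H\<rparr>)"
    using H.subgroup_is_group comm_monoid.submonoid_is_comm_monoid[OF _ H.subgroup_is_submonoid]
      M.a_comm_group
    by (auto intro!: abelian_group.intro
        simp: abelian_monoid_def abelian_group_axioms_def comm_group_def)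
  with H.subset show ?thesis
    by (auto intro!: left_module.intro left_module_axioms.intro R.ring_axioms
        simp: smult_l_distr smult_r_distr smult_assoc1 subset_iff)
qed

lemma submodule_restrict_iff:
  assumes "submodule H R M"
  shows "submodule K R (M\<lparr>carrier := H\<rparr>) \<longleftrightarrow> submodule K R M \<and> K \<subseteq> H"
proof -
  interpret H: left_module R "M\<lparr>carrier := H\<rparr>" by (rule submodule_left_module[OF assms])
  have "H \<subseteq> carrier M" using submoduleE(1)[OF assms] .
  show ?thesis
  proof safe
    assume K: "submodule K R (M\<lparr>carrier := H\<rparr>)"
    show "submodule K R M"
      by (rule submoduleI) (use H.submoduleE[OF K] \<open>H \<subseteq> carrier M\<close> in auto)
    show "x \<in> H" if "x \<in> K" for x
      using H.submoduleE(1)[OF K] that by auto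
  next
    assume "submodule K R M" "K \<subseteq> H"
    then show "submodule K R (M\<lparr>carrier := H\<rparr>)"
      by (intro H.submoduleI) (use submoduleE[of K] in auto)
  qed
qed

end

section \<open>Spans\<close>

definition span :: "('a, 'r) ring_scheme \<Rightarrow> ('a, 'm) module \<Rightarrow> 'm set \<Rightarrow> 'm set" where
  "span R M A = \<Inter>{H. submodule H R M \<and> A \<subseteq> H}"

lemma span_superset: "A \<subseteq> span R M A"
  unfolding span_def by blast

lemma span_minimal: "\<lbrakk>submodule H R M; A \<subseteq> H\<rbrakk> \<Longrightarrow> span R M A \<subseteq> H"
  unfolding span_def by blast

lemma span_mono: "A \<subseteq> B \<Longrightarrow> span R M A \<subseteq> span R M B"
  unfolding span_def by blast

context left_module
begin

lemma span_submodule: "A \<subseteq> carrier M \<Longrightarrow> submodule (span R M A) R M"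
  unfolding span_def by (rule submodule_Inter) (use carrier_submodule in auto)

lemma span_subset_carrier: "A \<subseteq> carrier M \<Longrightarrow> span R M A \<subseteq> carrier M"
  using span_submodule submoduleE(1) by blast

lemma span_empty: "span R M {} = {\<zero>\<^bsub>M\<^esub>}"
  using span_minimal[OF zero_submodule] submoduleE(2)[OF span_submodule[of "{}"]] by auto

lemma submodule_cyclic_sum:
  assumes a: "a \<in> carrier M" and K: "submodule K R M"
  shows "submodule {r \<odot>\<^bsub>M\<^esub> a \<oplus>\<^bsub>M\<^esub> y | r y. r \<in> carrier R \<and> y \<in> K} R M" (is "submodule ?P R M")
proof (rule submoduleI)
  note Kc = submoduleE(1)[OF K]
  show "?P \<subseteq> carrier M" using Kc a by blast
  show "\<zero>\<^bsub>M\<^esub> \<in> ?P"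
    using submoduleE(2)[OF K] a by (force intro: exI[of _ \<zero>])
next
  fix p q assume "p \<in> ?P" "q \<in> ?P"
  then obtain r y s z where p: "p = r \<odot>\<^bsub>M\<^esub> a \<oplus>\<^bsub>M\<^esub> y" and q: "q = s \<odot>\<^bsub>M\<^esub> a \<oplus>\<^bsub>M\<^esub> z"
    and rs: "r \<in> carrier R" "s \<in> carrier R" and yz: "y \<in> K" "z \<in> K"
    by blast
  have "p \<oplus>\<^bsub>M\<^esub> q = (r \<oplus> s) \<odot>\<^bsub>M\<^esub> a \<oplus>\<^bsub>M\<^esub> (y \<oplus>\<^bsub>M\<^esub> z)"
    using rs yz submoduleE(1)[OF K] a by (simp add: p q smult_l_distr M.a_ac subset_iff)
  then show "p \<oplus>\<^bsub>M\<^esub> q \<in> ?P"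
    using rs yz submoduleE(3)[OF K] by blast
next
  fix t p assume t: "t \<in> carrier R" and "p \<in> ?P"
  then obtain r y where p: "p = r \<odot>\<^bsub>M\<^esub> a \<oplus>\<^bsub>M\<^esub> y" and r: "r \<in> carrier R" and y: "y \<in> K"
    by blast
  have "t \<odot>\<^bsub>M\<^esub> p = (t \<otimes> r) \<odot>\<^bsub>M\<^esub> a \<oplus>\<^bsub>M\<^esub> t \<odot>\<^bsub>M\<^esub> y"
    using t r y submoduleE(1)[OF K] a by (simp add: p smult_r_distr smult_assoc1 subset_iff)
  then show "t \<odot>\<^bsub>M\<^esub> p \<in> ?P"
    using t r y submoduleE(5)[OF K] by blast
qed

lemma span_insert:
  assumes a: "a \<in> carrier M" and B: "B \<subseteq> carrier M"
  shows "span R M (insert a B) = {r \<odot>\<^bsub>M\<^esub> a \<oplus>\<^bsub>M\<^esub> y | r y. r \<in> carrier R \<and> y \<in> span R M B}"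
    (is "_ = ?P")
proof
  have SB: "submodule (span R M B) R M" using span_submodule[OF B] .
  have "a \<in> ?P"
    using a submoduleE(2)[OF SB] by (force intro: exI[of _ \<one>])
  moreover have "B \<subseteq> ?P"
  proof
    fix b assume "b \<in> B"
    then have "b = \<zero> \<odot>\<^bsub>M\<^esub> a \<oplus>\<^bsub>M\<^esub> b" "b \<in> span R M B"
      using a B span_superset[of B R M] by auto
    then show "b \<in> ?P" by blast
  qed
  ultimately show "span R M (insert a B) \<subseteq> ?P"
    by (intro span_minimal[OF submodule_cyclic_sum[OF a SB]]) auto
next
  have S: "submodule (span R M (insert a B)) R M" using span_submodule a B by simp
  have "a \<in> span R M (insert a B)" "span R M B \<subseteq> span R M (insert a B)"
    using span_superset[of "insert a B" R M] span_mono[of B "insert a B" R M] by auto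
  then show "?P \<subseteq> span R M (insert a B)"
    using submoduleE(3,5)[OF S] by blast
qed

lemma span_finite_subset:
  assumes "B \<subseteq> carrier M" and "x \<in> span R M B"
  obtains F where "F \<subseteq> B" "finite F" "x \<in> span R M F"
proof -
  let ?U = "{x. \<exists>F \<subseteq> B. finite F \<and> x \<in> span R M F}"
  have SF: "submodule (span R M F) R M" if "F \<subseteq> B" for F
    using span_submodule that assms(1) by blast
  have "submodule ?U R M"
  proof (rule submoduleI)
    show "?U \<subseteq> carrier M"
      using SF submoduleE(1) by blast
    show "\<zero>\<^bsub>M\<^esub> \<in> ?U"
      using span_empty by auto
  next
    fix a b assume "a \<in> ?U" "b \<in> ?U"
    then obtain F G where F: "F \<subseteq> B" "finite F" "a \<in> span R M F"
      and G: "G \<subseteq> B" "finite G" "b \<in> span R M G"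
      by blast
    have "span R M F \<subseteq> span R M (F \<union> G)" "span R M G \<subseteq> span R M (F \<union> G)"
      by (rule span_mono; blast)+
    with F G have "a \<oplus>\<^bsub>M\<^esub> b \<in> span R M (F \<union> G)"
      using submoduleE(3)[OF SF[of "F \<union> G"]] by blast
    with F G show "a \<oplus>\<^bsub>M\<^esub> b \<in> ?U"
      by (intro CollectI exI[of _ "F \<union> G"]) simp
  next
    fix r a assume r: "r \<in> carrier R" and "a \<in> ?U"
    then obtain F where F: "F \<subseteq> B" "finite F" "a \<in> span R M F"
      by blast
    then have "r \<odot>\<^bsub>M\<^esub> a \<in> span R M F"
      using submoduleE(5)[OF SF] r by blast
    with F show "r \<odot>\<^bsub>M\<^esub> a \<in> ?U"
      by blast
  qed
  moreover have "B \<subseteq> ?U"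
  proof
    fix b assume "b \<in> B"
    then show "b \<in> ?U"
      using span_superset[of "{b}" R M] by (intro CollectI exI[of _ "{b}"]) auto
  qed
  ultimately have "span R M B \<subseteq> ?U"
    by (rule span_minimal)
  with assms(2) obtain F where "F \<subseteq> B" "finite F" "x \<in> span R M F"
    by blast
  then show ?thesis
    by (rule that)
qed

lemma fg_module_span:
  assumes "finite A" and "A \<subseteq> carrier M"
  shows "fg_module R (M\<lparr>carrier := span R M A\<rparr>)"
proof -
  have S: "submodule (span R M A) R M" using span_submodule[OF assms(2)] .
  have "N = span R M A" if "submodule N R (M\<lparr>carrier := span R M A\<rparr>)" "A \<subseteq> N" for N
    using that span_minimal[of N R M A] submodule_restrict_iff[OF S] by auto
  then show ?thesis
    unfolding fg_module_def lmodule_iff_left_module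
    using submodule_left_module[OF S] assms(1) span_superset[of A R M]
    by (intro conjI exI[of _ A]) auto
qed

end

lemma fg_module_imp_span:
  assumes "fg_module R M"
  obtains A where "finite A" "A \<subseteq> carrier M" "span R M A = carrier M"
proof -
  interpret left_module R M using assms by (rule fg_module_left_module)
  obtain A where A: "finite A" "A \<subseteq> carrier M"
    and gen: "\<forall>N. submodule N R M \<and> A \<subseteq> N \<longrightarrow> N = carrier M"
    using assms unfolding fg_module_def by blast
  have "span R M A = carrier M"
    using gen span_submodule[OF A(2)] span_superset[of A R M] by blast
  with A show ?thesis by (rule that)
qed

section \<open>The descending chain condition\<close>

definition submodule_psubset :: "('a, 'r) ring_scheme \<Rightarrow> ('a, 'm) module \<Rightarrow> 'm set \<Rightarrow> ('m set \<times> 'm set) set"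
  where "submodule_psubset R M B = {(X, Y). submodule X R M \<and> submodule Y R M \<and> X \<subset> Y \<and> Y \<subseteq> B}"

definition left_ideal_psubset :: "('a, 'r) ring_scheme \<Rightarrow> ('a set \<times> 'a set) set"
  where "left_ideal_psubset R = {(I, J). left_ideal R I \<and> left_ideal R J \<and> I \<subset> J}"

text \<open>Inside \<open>K + R a\<close>, a submodule \<open>X\<close> is determined by \<open>X \<inter> K\<close> together with the ideal of
  coefficients of \<open>a\<close> in \<open>X\<close> modulo \<open>K\<close>; this reduces the chain condition on \<open>K + R a\<close> to those
  on \<open>K\<close> and on \<open>R\<close>.\<close>

definition coeff_ideal :: "('a, 'r) ring_scheme \<Rightarrow> ('a, 'm) module \<Rightarrow> 'm \<Rightarrow> 'm set \<Rightarrow> 'm set \<Rightarrow> 'a set"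
  where "coeff_ideal R M a K X = {r \<in> carrier R. \<exists>y\<in>K. r \<odot>\<^bsub>M\<^esub> a \<oplus>\<^bsub>M\<^esub> y \<in> X}"

lemma wf_left_ideal_psubset:
  assumes "left_artinian R"
  shows "wf (left_ideal_psubset R)"
  unfolding wf_iff_no_infinite_down_chain
proof
  assume "\<exists>f. \<forall>i. (f (Suc i), f i) \<in> left_ideal_psubset R"
  then obtain I where "\<forall>n. (I (Suc n), I n) \<in> left_ideal_psubset R"
    by blast
  then have "(\<forall>n. left_ideal R (I n)) \<and> (\<forall>n. I (Suc n) \<subset> I n)"
    unfolding left_ideal_psubset_def by auto
  with assms show False
    unfolding left_artinian_def by blast
qed

context left_module
begin

lemma left_ideal_coeff_ideal:
  assumes a: "a \<in> carrier M" and K: "submodule K R M" and X: "submodule X R M"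
  shows "left_ideal R (coeff_ideal R M a K X)" (is "left_ideal R ?I")
proof -
  note Kc = submoduleE(1)[OF K]
  have "\<zero> \<in> ?I"
    using submoduleE(2)[OF K] submoduleE(2)[OF X] a unfolding coeff_ideal_def by force
  moreover have "\<ominus> r \<in> ?I" if r_I: "r \<in> ?I" for r
  proof -
    obtain y where r: "r \<in> carrier R" and y: "y \<in> K" "r \<odot>\<^bsub>M\<^esub> a \<oplus>\<^bsub>M\<^esub> y \<in> X"
      using r_I unfolding coeff_ideal_def by blast
    have "(\<ominus> r) \<odot>\<^bsub>M\<^esub> a \<oplus>\<^bsub>M\<^esub> \<ominus>\<^bsub>M\<^esub> y = \<ominus>\<^bsub>M\<^esub> (r \<odot>\<^bsub>M\<^esub> a \<oplus>\<^bsub>M\<^esub> y)"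
      using r y(1) a Kc by (simp add: smult_l_minus M.minus_add subset_iff)
    then show ?thesis
      using r y submoduleE(4)[OF K] submoduleE(4)[OF X] unfolding coeff_ideal_def by force
  qed
  moreover have "r \<oplus> s \<in> ?I" if rs_I: "r \<in> ?I" "s \<in> ?I" for r s
  proof -
    obtain y z where rs: "r \<in> carrier R" "s \<in> carrier R" and yz: "y \<in> K" "z \<in> K"
      and in_X: "r \<odot>\<^bsub>M\<^esub> a \<oplus>\<^bsub>M\<^esub> y \<in> X" "s \<odot>\<^bsub>M\<^esub> a \<oplus>\<^bsub>M\<^esub> z \<in> X"
      using rs_I unfolding coeff_ideal_def by blast
    have "(r \<oplus> s) \<odot>\<^bsub>M\<^esub> a \<oplus>\<^bsub>M\<^esub> (y \<oplus>\<^bsub>M\<^esub> z) = (r \<odot>\<^bsub>M\<^esub> a \<oplus>\<^bsub>M\<^esub> y) \<oplus>\<^bsub>M\<^esub> (s \<odot>\<^bsub>M\<^esub> a \<oplus>\<^bsub>M\<^esub> z)"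
      using rs yz a Kc by (simp add: smult_l_distr M.a_ac subset_iff)
    then show ?thesis
      using rs yz in_X submoduleE(3)[OF K] submoduleE(3)[OF X] unfolding coeff_ideal_def by force
  qed
  moreover have "t \<otimes> r \<in> ?I" if t: "t \<in> carrier R" and r_I: "r \<in> ?I" for t r
  proof -
    obtain y where r: "r \<in> carrier R" and y: "y \<in> K" "r \<odot>\<^bsub>M\<^esub> a \<oplus>\<^bsub>M\<^esub> y \<in> X"
      using r_I unfolding coeff_ideal_def by blast
    have "(t \<otimes> r) \<odot>\<^bsub>M\<^esub> a \<oplus>\<^bsub>M\<^esub> t \<odot>\<^bsub>M\<^esub> y = t \<odot>\<^bsub>M\<^esub> (r \<odot>\<^bsub>M\<^esub> a \<oplus>\<^bsub>M\<^esub> y)"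
      using t r y(1) a Kc by (simp add: smult_r_distr smult_assoc1 subset_iff)
    then show ?thesis
      using t r y submoduleE(5)[OF K] submoduleE(5)[OF X] unfolding coeff_ideal_def by force
  qed
  moreover have "?I \<subseteq> carrier R"
    unfolding coeff_ideal_def by blast
  ultimately show ?thesis
    unfolding left_ideal_def subgroup_def by (auto simp: a_inv_def[symmetric])
qed

lemma submodule_eq_by_coeff_ideal:
  assumes a: "a \<in> carrier M" and B: "B \<subseteq> carrier M"
    and X: "submodule X R M" and Y: "submodule Y R M"
    and "X \<subseteq> Y" and Y_span: "Y \<subseteq> span R M (insert a B)"
    and "Y \<inter> span R M B \<subseteq> X"
    and coeff: "coeff_ideal R M a (span R M B) Y \<subseteq> coeff_ideal R M a (span R M B) X"
  shows "X = Y"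
proof
  let ?K = "span R M B"
  have K: "submodule ?K R M" using span_submodule[OF B] .
  note Kc = submoduleE(1)[OF K]
  show "Y \<subseteq> X"
  proof
    fix y assume "y \<in> Y"
    then obtain r z where r: "r \<in> carrier R" and z: "z \<in> ?K" and y: "y = r \<odot>\<^bsub>M\<^esub> a \<oplus>\<^bsub>M\<^esub> z"
      using Y_span unfolding span_insert[OF a B] by blast
    have "r \<in> coeff_ideal R M a ?K Y"
      using r z \<open>y \<in> Y\<close> unfolding coeff_ideal_def y by blast
    with coeff obtain z' where z': "z' \<in> ?K" and w: "r \<odot>\<^bsub>M\<^esub> a \<oplus>\<^bsub>M\<^esub> z' \<in> X"
      unfolding coeff_ideal_def by blast
    define w where "w = r \<odot>\<^bsub>M\<^esub> a \<oplus>\<^bsub>M\<^esub> z'"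
    have wc: "w \<in> carrier M" using w_def r a z' Kc by auto
    have diff: "y \<oplus>\<^bsub>M\<^esub> \<ominus>\<^bsub>M\<^esub> w = z \<oplus>\<^bsub>M\<^esub> \<ominus>\<^bsub>M\<^esub> z'"
      using r a z z' Kc by (simp add: y w_def M.minus_add M.a_ac M.r_neg M.r_neg1 M.r_neg2 subset_iff)
    have "y \<oplus>\<^bsub>M\<^esub> \<ominus>\<^bsub>M\<^esub> w \<in> Y"
      using \<open>y \<in> Y\<close> w \<open>X \<subseteq> Y\<close> submoduleE(3,4)[OF Y] unfolding w_def by blast
    moreover have "y \<oplus>\<^bsub>M\<^esub> \<ominus>\<^bsub>M\<^esub> w \<in> ?K"
      unfolding diff using z z' submoduleE(3,4)[OF K] by blast
    ultimately have "y \<oplus>\<^bsub>M\<^esub> \<ominus>\<^bsub>M\<^esub> w \<in> X"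
      using \<open>Y \<inter> ?K \<subseteq> X\<close> by blast
    moreover have "y = (y \<oplus>\<^bsub>M\<^esub> \<ominus>\<^bsub>M\<^esub> w) \<oplus>\<^bsub>M\<^esub> w"
      using wc \<open>y \<in> Y\<close> submoduleE(1)[OF Y] by (auto simp: M.a_assoc M.l_neg)
    ultimately show "y \<in> X"
      using w submoduleE(3)[OF X] unfolding w_def by metis
  qed
qed (fact)

lemma wf_submodule_psubset_insert:
  assumes "left_artinian R" and a: "a \<in> carrier M" and B: "B \<subseteq> carrier M"
    and wf_B: "wf (submodule_psubset R M (span R M B))"
  shows "wf (submodule_psubset R M (span R M (insert a B)))"
proof -
  let ?K = "span R M B"
  have K: "submodule ?K R M" using span_submodule[OF B] .
  define f where "f X = (coeff_ideal R M a ?K X, X \<inter> ?K)" for X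
  have "submodule_psubset R M (span R M (insert a B))
      \<subseteq> inv_image (left_ideal_psubset R <*lex*> submodule_psubset R M ?K) f"
  proof safe
    fix X Y assume "(X, Y) \<in> submodule_psubset R M (span R M (insert a B))"
    then have X: "submodule X R M" and Y: "submodule Y R M" and "X \<subset> Y"
      and Y_span: "Y \<subseteq> span R M (insert a B)"
      unfolding submodule_psubset_def by auto
    have coeff_mono: "coeff_ideal R M a ?K X \<subseteq> coeff_ideal R M a ?K Y"
      using \<open>X \<subset> Y\<close> unfolding coeff_ideal_def by blast
    show "(X, Y) \<in> inv_image (left_ideal_psubset R <*lex*> submodule_psubset R M ?K) f"
    proof (cases "coeff_ideal R M a ?K X = coeff_ideal R M a ?K Y")
      case False
      then show ?thesis
        using coeff_mono left_ideal_coeff_ideal[OF a K X] left_ideal_coeff_ideal[OF a K Y]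
        unfolding f_def left_ideal_psubset_def by auto
    next
      case True
      then have "X \<inter> ?K \<subset> Y \<inter> ?K"
        using submodule_eq_by_coeff_ideal[OF a B X Y _ Y_span] \<open>X \<subset> Y\<close> by blast
      then show ?thesis
        using True submodule_Int[OF X K] submodule_Int[OF Y K]
        unfolding f_def submodule_psubset_def by auto
    qed
  qed
  moreover have "wf (inv_image (left_ideal_psubset R <*lex*> submodule_psubset R M ?K) f)"
    using wf_left_ideal_psubset[OF assms(1)] wf_B by auto
  ultimately show ?thesis
    by (rule wf_subset[rotated])
qed

lemma wf_submodule_psubset_span:
  assumes "left_artinian R" and "finite C" and "C \<subseteq> carrier M"
  shows "wf (submodule_psubset R M (span R M C))"
  using assms(2,3)
proof (induction C rule: finite_induct)
  case empty
  have "submodule_psubset R M (span R M {}) = {}"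
    unfolding span_empty submodule_psubset_def using submoduleE(2) by blast
  then show ?case by simp
next
  case (insert a C)
  then show ?case
    using wf_submodule_psubset_insert[OF assms(1)] by simp
qed

end

lemma fg_module_wf_submodule_psubset:
  assumes "left_artinian R" and "fg_module R M"
  shows "wf (submodule_psubset R M (carrier M))"
proof -
  interpret left_module R M using assms(2) by (rule fg_module_left_module)
  obtain C where "finite C" "C \<subseteq> carrier M" "span R M C = carrier M"
    using fg_module_imp_span[OF assms(2)] .
  then show ?thesis
    using wf_submodule_psubset_span[OF assms(1)] by metis
qed

section \<open>The socle\<close>

lemma submodule_subset_soc:
  "\<lbrakk>submodule S R M; simple_module R (M\<lparr>carrier := S\<rparr>)\<rbrakk> \<Longrightarrow> S \<subseteq> soc R M"
  unfolding soc_def by blast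

lemma soc_minimal:
  "\<lbrakk>submodule H R M; \<And>S. \<lbrakk>submodule S R M; simple_module R (M\<lparr>carrier := S\<rparr>)\<rbrakk> \<Longrightarrow> S \<subseteq> H\<rbrakk>
    \<Longrightarrow> soc R M \<subseteq> H"
  unfolding soc_def by blast

lemma simple_module_nontrivial:
  "simple_module R (M\<lparr>carrier := S\<rparr>) \<Longrightarrow> S \<noteq> {\<zero>\<^bsub>M\<^esub>}"
  unfolding simple_module_def by simp

context left_module
begin

lemma soc_submodule: "submodule (soc R M) R M"
  unfolding soc_def by (rule submodule_Inter) (use carrier_submodule submoduleE(1) in blast)+

lemma simple_submodule_cases:
  assumes S: "submodule S R M" and simple: "simple_module R (M\<lparr>carrier := S\<rparr>)"
    and "submodule Y R M" and "Y \<subseteq> S"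
  shows "Y = {\<zero>\<^bsub>M\<^esub>} \<or> Y = S"
  using simple assms(3,4) submodule_restrict_iff[OF S] unfolding simple_module_def by auto

lemma simple_submodule_span:
  assumes S: "submodule S R M" and simple: "simple_module R (M\<lparr>carrier := S\<rparr>)"
    and t: "t \<in> S" "t \<noteq> \<zero>\<^bsub>M\<^esub>"
  shows "span R M {t} = S"
proof -
  have t_carrier: "{t} \<subseteq> carrier M" using submoduleE(1)[OF S] t(1) by blast
  have "span R M {t} \<subseteq> S" using span_minimal[OF S] t(1) by blast
  moreover have "t \<in> span R M {t}" using span_superset[of "{t}" R M] by blast
  ultimately show ?thesis
    using simple_submodule_cases[OF S simple span_submodule[OF t_carrier]] t(2) by auto
qed

lemma simple_submodule_fg:
  assumes S: "submodule S R M" and simple: "simple_module R (M\<lparr>carrier := S\<rparr>)"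
  shows "fg_module R (M\<lparr>carrier := S\<rparr>)"
proof -
  obtain t where t: "t \<in> S" "t \<noteq> \<zero>\<^bsub>M\<^esub>"
    using simple_module_nontrivial[OF simple] submoduleE(2)[OF S] by blast
  then have "{t} \<subseteq> carrier M" using submoduleE(1)[OF S] by blast
  then show ?thesis
    using fg_module_span[of "{t}"] simple_submodule_span[OF S simple t] by simp
qed

lemma simple_span_disjoint:
  assumes t: "t \<in> carrier M" and A: "A \<subseteq> carrier M"
    and simple: "simple_module R (M\<lparr>carrier := span R M {t}\<rparr>)" and "t \<notin> span R M A"
  shows "span R M {t} \<inter> span R M A = {\<zero>\<^bsub>M\<^esub>}"
proof -
  have St: "submodule (span R M {t}) R M" using span_submodule t by simp
  have "span R M {t} \<inter> span R M A \<noteq> span R M {t}"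
    using \<open>t \<notin> span R M A\<close> span_superset[of "{t}" R M] by blast
  then show ?thesis
    using simple_submodule_cases[OF St simple submodule_Int[OF St span_submodule[OF A]]] by blast
qed

lemma independent_sequence_span_disjoint:
  fixes x :: "nat \<Rightarrow> 'm"
  assumes x: "\<And>n. x n \<in> carrier M"
    and indep: "\<And>n. span R M {x n} \<inter> span R M (x ` {..<n}) = {\<zero>\<^bsub>M\<^esub>}"
  shows "z \<in> span R M (x ` {..k}) \<Longrightarrow> z \<in> span R M (x ` {Suc k..<n}) \<Longrightarrow> z = \<zero>\<^bsub>M\<^esub>"
proof (induction n arbitrary: z)
  case 0
  then show ?case using span_empty by simp
next
  case (Suc n)
  show ?case
  proof (cases "n \<le> k")
    case True
    then show ?thesis using Suc.prems(2) span_empty by simp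
  next
    case False
    have xs: "x ` I \<subseteq> carrier M" for I using x by blast
    have S: "submodule (span R M (x ` I)) R M" for I using span_submodule[OF xs] .
    have "x ` {Suc k..<Suc n} = insert (x n) (x ` {Suc k..<n})"
      using False by (auto simp: atLeastLessThanSuc)
    then obtain r y where r: "r \<in> carrier R" and y: "y \<in> span R M (x ` {Suc k..<n})"
      and z: "z = r \<odot>\<^bsub>M\<^esub> x n \<oplus>\<^bsub>M\<^esub> y"
      using Suc.prems(2) span_insert[OF x xs] by auto
    have yc: "y \<in> carrier M" using y submoduleE(1)[OF S] by blast
    have below_n: "span R M (x ` {..k}) \<subseteq> span R M (x ` {..<n})"
      "span R M (x ` {Suc k..<n}) \<subseteq> span R M (x ` {..<n})"
      using False by (auto intro!: span_mono)
    have "r \<odot>\<^bsub>M\<^esub> x n = z \<oplus>\<^bsub>M\<^esub> \<ominus>\<^bsub>M\<^esub> y"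
      using r x yc by (simp add: z M.a_assoc M.r_neg)
    moreover have "z \<in> span R M (x ` {..<n})" "y \<in> span R M (x ` {..<n})"
      using Suc.prems(1) y below_n by blast+
    ultimately have "r \<odot>\<^bsub>M\<^esub> x n \<in> span R M (x ` {..<n})"
      using submoduleE(3,4)[OF S[of "{..<n}"]] by simp
    moreover have "r \<odot>\<^bsub>M\<^esub> x n \<in> span R M {x n}"
      using submoduleE(5)[OF span_submodule r] x span_superset[of "{x n}" R M] by auto
    ultimately have "r \<odot>\<^bsub>M\<^esub> x n = \<zero>\<^bsub>M\<^esub>"
      using indep[of n] by blast
    then have "z = y" using yc by (simp add: z)
    then show ?thesis using Suc.IH Suc.prems(1) y by blast
  qed
qed

lemma independent_sequence_not_wf:
  fixes x :: "nat \<Rightarrow> 'm"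
  assumes x: "\<And>n. x n \<in> carrier M" and nonzero: "\<And>n. x n \<noteq> \<zero>\<^bsub>M\<^esub>"
    and indep: "\<And>n. span R M {x n} \<inter> span R M (x ` {..<n}) = {\<zero>\<^bsub>M\<^esub>}"
  shows "\<not> wf (submodule_psubset R M (carrier M))"
proof
  define W where "W k = span R M (x ` {k..})" for k
  have xs: "x ` I \<subseteq> carrier M" for I using x by blast
  have x_notin: "x k \<notin> W (Suc k)" for k
  proof
    assume "x k \<in> W (Suc k)"
    then obtain F where F: "F \<subseteq> x ` {Suc k..}" "finite F" "x k \<in> span R M F"
      unfolding W_def by (rule span_finite_subset[OF xs])
    obtain C where C: "C \<subseteq> {Suc k..}" "finite C" "F = x ` C"
      using finite_subset_image[OF F(2,1)] by blast
    obtain n where "\<forall>i\<in>C. i < n"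
      using C(2) finite_nat_set_iff_bounded by blast
    with C have "F \<subseteq> x ` {Suc k..<n}" by auto
    then have "x k \<in> span R M (x ` {Suc k..<n})"
      using F(3) span_mono by blast
    moreover have "x k \<in> span R M (x ` {..k})"
      using span_superset[of "x ` {..k}" R M] by blast
    ultimately show False
      using independent_sequence_span_disjoint[OF x indep] nonzero by blast
  qed
  have "(W (Suc k), W k) \<in> submodule_psubset R M (carrier M)" for k
  proof -
    have "W (Suc k) \<subseteq> W k"
      unfolding W_def by (rule span_mono) auto
    moreover have "x k \<in> W k"
      unfolding W_def using span_superset[of "x ` {k..}" R M] by auto
    ultimately show ?thesis
      using x_notin[of k] span_submodule[OF xs] span_subset_carrier[OF xs]
      unfolding submodule_psubset_def W_def by blast
  qed
  moreover assume "wf (submodule_psubset R M (carrier M))"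
  ultimately show False
    unfolding wf_iff_no_infinite_down_chain by blast
qed

lemma soc_extend_if_not_fg:
  assumes not_fg: "\<not> fg_module R (M\<lparr>carrier := soc R M\<rparr>)"
    and "finite A" and A: "A \<subseteq> soc R M"
  obtains t where "t \<in> soc R M" "t \<notin> span R M A" "simple_module R (M\<lparr>carrier := span R M {t}\<rparr>)"
proof -
  note soc = soc_submodule
  have Ac: "A \<subseteq> carrier M" using A submoduleE(1)[OF soc] by blast
  have SA: "submodule (span R M A) R M" using span_submodule[OF Ac] .
  have "span R M A \<noteq> soc R M"
    using fg_module_span[OF \<open>finite A\<close> Ac] not_fg by metis
  moreover have "span R M A \<subseteq> soc R M"
    using span_minimal[OF soc A] .
  ultimately obtain S where S: "submodule S R M" "simple_module R (M\<lparr>carrier := S\<rparr>)"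
    and "\<not> S \<subseteq> span R M A"
    using soc_minimal[OF SA] by blast
  then obtain t where t: "t \<in> S" "t \<notin> span R M A" by blast
  then have "t \<noteq> \<zero>\<^bsub>M\<^esub>" using submoduleE(2)[OF SA] by blast
  then have "span R M {t} = S" using simple_submodule_span[OF S t(1)] by blast
  then show ?thesis
    using that submodule_subset_soc[OF S] S(2) t by blast
qed

lemma independent_sequence_if_soc_not_fg:
  assumes not_fg: "\<not> fg_module R (M\<lparr>carrier := soc R M\<rparr>)"
  obtains x :: "nat \<Rightarrow> 'm" where "\<And>n. x n \<in> carrier M" "\<And>n. x n \<noteq> \<zero>\<^bsub>M\<^esub>"
    "\<And>n. span R M {x n} \<inter> span R M (x ` {..<n}) = {\<zero>\<^bsub>M\<^esub>}"
proof -
  note soc_carrier = submoduleE(1)[OF soc_submodule]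
  define good where "good A t \<longleftrightarrow>
    t \<in> soc R M \<and> t \<notin> span R M A \<and> simple_module R (M\<lparr>carrier := span R M {t}\<rparr>)" for A t
  define g where "g A = (SOME t. good A t)" for A
  have g: "good A (g A)" if A: "finite A" "A \<subseteq> soc R M" for A
  proof -
    obtain t where "good A t"
      using soc_extend_if_not_fg[OF not_fg A] unfolding good_def by blast
    then show ?thesis
      unfolding g_def by (rule someI)
  qed
  \<comment> \<open>The iterate collects \<open>x 0, \<dots>, x (n - 1)\<close>, and \<open>x n\<close> is chosen outside their span.\<close>
  define x where "x n = g (((\<lambda>B. insert (g B) B) ^^ n) {})" for n
  have image_x: "((\<lambda>B. insert (g B) B) ^^ n) {} = x ` {..<n}" for n
    by (induction n) (auto simp: x_def lessThan_Suc)
  have x_soc: "x n \<in> soc R M" for n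
  proof (induction n rule: less_induct)
    case (less n)
    then have "x ` {..<n} \<subseteq> soc R M" by blast
    then show ?case
      using g[of "x ` {..<n}"] image_x[of n] unfolding x_def good_def by simp
  qed
  have x_good: "good (x ` {..<n}) (x n)" for n
    using g[of "x ` {..<n}"] image_x[of n] x_soc unfolding x_def by auto
  have x_carrier: "x n \<in> carrier M" for n
    using x_soc soc_carrier by blast
  have x_nonzero: "x n \<noteq> \<zero>\<^bsub>M\<^esub>" for n
  proof -
    have "x ` {..<n} \<subseteq> carrier M" using x_carrier by blast
    then have "\<zero>\<^bsub>M\<^esub> \<in> span R M (x ` {..<n})"
      by (rule submoduleE(2)[OF span_submodule])
    then show ?thesis
      using x_good[of n] unfolding good_def by auto
  qed
  have x_indep: "span R M {x n} \<inter> span R M (x ` {..<n}) = {\<zero>\<^bsub>M\<^esub>}" for n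
    using simple_span_disjoint[OF x_carrier] x_carrier x_good[of n] unfolding good_def by blast
  show ?thesis
    using x_carrier x_nonzero x_indep by (rule that)
qed

end

lemma fg_soc:
  assumes "left_artinian R" and "fg_module R M"
  shows "fg_module R (M\<lparr>carrier := soc R M\<rparr>)"
proof (rule ccontr)
  interpret left_module R M using assms(2) by (rule fg_module_left_module)
  assume "\<not> ?thesis"
  then obtain x :: "nat \<Rightarrow> _" where "\<And>n. x n \<in> carrier M" "\<And>n. x n \<noteq> \<zero>\<^bsub>M\<^esub>"
    "\<And>n. span R M {x n} \<inter> span R M (x ` {..<n}) = {\<zero>\<^bsub>M\<^esub>}"
    by (elim independent_sequence_if_soc_not_fg) blast
  then show False
    using independent_sequence_not_wf fg_module_wf_submodule_psubset[OF assms] by blast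
qed

section \<open>Pre-radicals\<close>

lemma preradical_submodule:
  "\<lbrakk>preradical R \<alpha>; fg_module R M\<rbrakk> \<Longrightarrow> submodule (\<alpha> M) R M"
  unfolding preradical_def by blast

lemma preradical_restrict_mono:
  assumes "preradical R \<alpha>" and "S \<subseteq> T"
    and "fg_module R (M\<lparr>carrier := S\<rparr>)" and "fg_module R (M\<lparr>carrier := T\<rparr>)"
  shows "\<alpha> (M\<lparr>carrier := S\<rparr>) \<subseteq> \<alpha> (M\<lparr>carrier := T\<rparr>)"
proof -
  have "(\<lambda>v. v) \<in> lmod_hom R (M\<lparr>carrier := S\<rparr>) (M\<lparr>carrier := T\<rparr>)"
    using assms(2) unfolding lmod_hom_def by auto
  then show ?thesis
    using assms(1,3,4) unfolding preradical_def by (metis image_ident)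
qed

lemma torsionfree_class_submodule:
  assumes "preradical R \<beta>" and "N \<in> torsionfree_class R \<beta>"
    and "S \<subseteq> carrier N" and fg_S: "fg_module R (N\<lparr>carrier := S\<rparr>)"
  shows "N\<lparr>carrier := S\<rparr> \<in> torsionfree_class R \<beta>"
proof -
  have "N\<lparr>carrier := carrier N\<rparr> = N" by simp
  then have "\<beta> (N\<lparr>carrier := S\<rparr>) \<subseteq> {\<zero>\<^bsub>N\<^esub>}"
    using preradical_restrict_mono[OF assms(1,3) fg_S] assms(2)
    unfolding torsionfree_class_def by auto
  moreover have "\<zero>\<^bsub>N\<^esub> \<in> \<beta> (N\<lparr>carrier := S\<rparr>)"
    using fg_S left_module.submoduleE(2)[OF fg_module_left_module preradical_submodule[OF assms(1)]]
    by fastforce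
  ultimately show ?thesis
    using fg_S unfolding torsionfree_class_def by auto
qed

lemma simple_submodule_torsion:
  assumes \<alpha>: "preradical R \<alpha>" and \<beta>: "preradical R \<beta>"
    and incl: "torsionfree_class R \<alpha> \<subseteq> torsion_class R \<beta>"
    and N: "N \<in> torsionfree_class R \<beta>"
    and T: "submodule T R N" and simple: "simple_module R (N\<lparr>carrier := T\<rparr>)"
  shows "N\<lparr>carrier := T\<rparr> \<in> torsion_class R \<alpha>"
proof -
  interpret left_module R N
    using N unfolding torsionfree_class_def by (blast intro: fg_module_left_module)
  have fg_T: "fg_module R (N\<lparr>carrier := T\<rparr>)"
    using simple_submodule_fg[OF T simple] .
  have "submodule (\<alpha> (N\<lparr>carrier := T\<rparr>)) R N" "\<alpha> (N\<lparr>carrier := T\<rparr>) \<subseteq> T"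
    using preradical_submodule[OF \<alpha> fg_T] submodule_restrict_iff[OF T] by auto
  then have "\<alpha> (N\<lparr>carrier := T\<rparr>) = {\<zero>\<^bsub>N\<^esub>} \<or> \<alpha> (N\<lparr>carrier := T\<rparr>) = T"
    by (rule simple_submodule_cases[OF T simple])
  moreover have "\<alpha> (N\<lparr>carrier := T\<rparr>) \<noteq> {\<zero>\<^bsub>N\<^esub>}"
  proof
    assume "\<alpha> (N\<lparr>carrier := T\<rparr>) = {\<zero>\<^bsub>N\<^esub>}"
    then have "N\<lparr>carrier := T\<rparr> \<in> torsion_class R \<beta>"
      using fg_T incl unfolding torsionfree_class_def by auto
    moreover have "N\<lparr>carrier := T\<rparr> \<in> torsionfree_class R \<beta>"
      using torsionfree_class_submodule[OF \<beta> N submoduleE(1)[OF T] fg_T] .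
    ultimately have "T = {\<zero>\<^bsub>N\<^esub>}"
      unfolding torsion_class_def torsionfree_class_def by simp
    then show False
      using simple_module_nontrivial[OF simple] by contradiction
  qed
  ultimately show ?thesis
    using fg_T unfolding torsion_class_def by simp
qed

lemma soc_torsion:
  assumes \<alpha>: "preradical R \<alpha>" and \<beta>: "preradical R \<beta>"
    and incl: "torsionfree_class R \<alpha> \<subseteq> torsion_class R \<beta>"
    and N: "N \<in> torsionfree_class R \<beta>"
    and fg_soc_N: "fg_module R (N\<lparr>carrier := soc R N\<rparr>)"
  shows "N\<lparr>carrier := soc R N\<rparr> \<in> torsion_class R \<alpha>"
proof -
  interpret left_module R N
    using N unfolding torsionfree_class_def by (blast intro: fg_module_left_module)
  have \<alpha>_soc: "submodule (\<alpha> (N\<lparr>carrier := soc R N\<rparr>)) R N" "\<alpha> (N\<lparr>carrier := soc R N\<rparr>) \<subseteq> soc R N"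
    using preradical_submodule[OF \<alpha> fg_soc_N] submodule_restrict_iff[OF soc_submodule] by auto
  have "soc R N \<subseteq> \<alpha> (N\<lparr>carrier := soc R N\<rparr>)"
  proof (rule soc_minimal[OF \<alpha>_soc(1)])
    fix T assume T: "submodule T R N" and simple: "simple_module R (N\<lparr>carrier := T\<rparr>)"
    then have "\<alpha> (N\<lparr>carrier := T\<rparr>) = T" "fg_module R (N\<lparr>carrier := T\<rparr>)"
      using simple_submodule_torsion[OF \<alpha> \<beta> incl N] unfolding torsion_class_def by auto
    then show "T \<subseteq> \<alpha> (N\<lparr>carrier := soc R N\<rparr>)"
      using preradical_restrict_mono[OF \<alpha> submodule_subset_soc[OF T simple] _ fg_soc_N] by simp
  qed
  with \<alpha>_soc(2) fg_soc_N show ?thesis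
    unfolding torsion_class_def by auto
qed

theorem lemma2p2:
  fixes R :: "('a, 'r) ring_scheme"
    and \<alpha> \<beta> :: "('a, 'm) module \<Rightarrow> 'm set"
  assumes "left_artinian R"
    and "radical R \<beta>"
    and "preradical R \<alpha>"
    and "torsionfree_class R \<alpha> \<subseteq> torsion_class R \<beta>"
    and "fg_module R M"
    and "is_quotient_by R M (\<beta> M) N p"
  shows "N\<lparr>carrier := soc R N\<rparr> \<in> torsion_class R \<alpha> \<inter> torsionfree_class R \<beta>"
proof -
  have fg_N: "fg_module R N" and \<beta>: "preradical R \<beta>"
    using assms(2,6) unfolding is_quotient_by_def radical_def by auto
  have N: "N \<in> torsionfree_class R \<beta>"
    using assms(2,5,6) fg_N unfolding radical_def torsionfree_class_def by blast
  have fg_soc_N: "fg_module R (N\<lparr>carrier := soc R N\<rparr>)"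
    using fg_soc[OF assms(1) fg_N] .
  interpret left_module R N using fg_N by (rule fg_module_left_module)
  have "soc R N \<subseteq> carrier N"
    using submoduleE(1)[OF soc_submodule] .
  then show ?thesis
    using soc_torsion[OF assms(3) \<beta> assms(4) N fg_soc_N] torsionfree_class_submodule[OF \<beta> N _ fg_soc_N]
    by blast
qed

end
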